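(* Let $G=(V,E)$ be a finite simple graph and let $F$ be any finite field. Let $L$ be its connection matrix and $|H|$ its sign-less Hodge Laplacian, both regarded as matrices over $F$ via the canonical ring homomorphism $\mathbb{Z}\to F$. Then $L$ is invertible over $F$ and $|H|=L-L^{-1}$ holds over $F$. In particular, the map $\psi\mapsto L\psi$ is a bijection of the finite set $F^X$ of $F$-valued functions on the simplices, and the two-sided orbit $n\mapsto L^n\psi$, $n\in\mathbb{Z}$, is well defined.
   Context: Let $G=(V,E)$ be a finite simple graph. Its associated $1$-dimensional simplicial complex is the set of simplices $X=\{\{v\}: v\in V\}\cup E$, where each edge is regarded as a $2$-element subset of $V$; matrices are indexed by $X$. The connection matrix $L$ has $L(x,y)=1$ if $x\cap y\neq\emptyset$ and $L(x,y)=0$ otherwise. The sign-less exterior derivative $|d|$ has $|d|(x,y)=1$ if $y\subset x$ and $|x|=|y|+1$, and $0$ otherwise; the sign-less Hodge Laplacian is $|H|=(|d|+|d|^T)^2$. *)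

theory Defs
  imports "HOL-Library.FuncSet"
begin

definition simple_graph :: "'v set \<Rightarrow> 'v set set \<Rightarrow> bool" where
  "simple_graph V E \<longleftrightarrow> finite V \<and> (\<forall>e\<in>E. e \<subseteq> V \<and> card e = 2)"

definition simplices :: "'v set \<Rightarrow> 'v set set \<Rightarrow> 'v set set" where
  "simplices V E = {{v} | v. v \<in> V} \<union> E"

text \<open>Matrices indexed by simplices, with entries in a ring; only entries on X \<times> X matter.\<close>
type_synonym ('v, 'a) smat = "'v set \<Rightarrow> 'v set \<Rightarrow> 'a"

definition smat_mult :: "'v set set \<Rightarrow> ('v,'a::comm_ring_1) smat \<Rightarrow> ('v,'a) smat \<Rightarrow> ('v,'a) smat" where
  "smat_mult X A B = (\<lambda>x y. \<Sum>z\<in>X. A x z * B z y)"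

definition smat_one :: "('v,'a::comm_ring_1) smat" where
  "smat_one = (\<lambda>x y. if x = y then 1 else 0)"

definition smat_add :: "('v,'a::comm_ring_1) smat \<Rightarrow> ('v,'a) smat \<Rightarrow> ('v,'a) smat" where
  "smat_add A B = (\<lambda>x y. A x y + B x y)"

definition smat_transpose :: "('v,'a) smat \<Rightarrow> ('v,'a) smat" where
  "smat_transpose A = (\<lambda>x y. A y x)"

definition connection_matrix :: "('v,'a::comm_ring_1) smat" where
  "connection_matrix = (\<lambda>x y. of_int (if x \<inter> y \<noteq> {} then 1 else 0))"

definition signless_d :: "('v,'a::comm_ring_1) smat" where
  "signless_d = (\<lambda>x y. of_int (if y \<subset> x \<and> card x = card y + 1 then 1 else 0))"

definition signless_hodge :: "'v set set \<Rightarrow> ('v,'a::comm_ring_1) smat" where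
  "signless_hodge X =
     (let D = smat_add signless_d (smat_transpose signless_d) in smat_mult X D D)"

definition smat_inverse_on :: "'v set set \<Rightarrow> ('v,'a::comm_ring_1) smat \<Rightarrow> ('v,'a) smat \<Rightarrow> bool" where
  "smat_inverse_on X A B \<longleftrightarrow>
     (\<forall>x\<in>X. \<forall>y\<in>X. smat_mult X A B x y = smat_one x y \<and> smat_mult X B A x y = smat_one x y)"

definition smat_apply :: "'v set set \<Rightarrow> ('v,'a::comm_ring_1) smat \<Rightarrow> ('v set \<Rightarrow> 'a) \<Rightarrow> ('v set \<Rightarrow> 'a)" where
  "smat_apply X A \<psi> = (\<lambda>x\<in>X. \<Sum>y\<in>X. A x y * \<psi> y)"

end

theory Submission
  imports Defs
begin

text \<open>
  Order the simplices as vertices first, then edges, and let \<open>B\<close> be the vertex-edge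
  incidence matrix. Then \<open>|d| + |d|\<^sup>T\<close> has blocks \<open>0, B; B\<^sup>T, 0\<close>, so
  \<open>|H| = diag (B B\<^sup>T, B\<^sup>T B)\<close>, while \<open>L\<close> has blocks \<open>1, B; B\<^sup>T, C\<close> with \<open>C\<close> the
  edge-edge connection matrix. Two distinct edges of a simple graph share at most one
  vertex, hence \<open>B\<^sup>T B = C + 1\<close>. With this single identity one checks blockwise that
  \<open>L - |H| = (1 - B B\<^sup>T, B; B\<^sup>T, -1)\<close> is a right inverse of \<open>L\<close>; as \<open>L\<close> and \<open>|H|\<close> are
  symmetric it is also a left inverse. All of this works over any commutative ring.
\<close>

lemma smat_mult_symmetric:
  assumes "\<And>x y. A x y = A y x" and "\<And>x y. B x y = B y x"
  shows "smat_mult X A B x y = (smat_mult X B A y x :: 'a::comm_ring_1)"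
  unfolding smat_mult_def by (rule sum.cong) (auto simp: assms mult.commute)

lemma smat_inverse_on_if_symmetric:
  assumes "\<And>x y. A x y = A y x" and "\<And>x y. B x y = B y x"
    and "\<And>x y. x \<in> X \<Longrightarrow> y \<in> X \<Longrightarrow> smat_mult X A B x y = (smat_one x y :: 'a::comm_ring_1)"
  shows "smat_inverse_on X A B"
  unfolding smat_inverse_on_def
  using assms smat_mult_symmetric[OF assms(2,1), of X] by (auto simp: smat_one_def)

lemma smat_apply_smat_apply:
  assumes "finite X" and "\<psi> \<in> X \<rightarrow>\<^sub>E (UNIV :: 'a set)"
    and "\<And>x y. x \<in> X \<Longrightarrow> y \<in> X \<Longrightarrow> smat_mult X A B x y = (smat_one x y :: 'a::comm_ring_1)"
  shows "smat_apply X A (smat_apply X B \<psi>) = \<psi>"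
proof
  fix x
  show "smat_apply X A (smat_apply X B \<psi>) x = \<psi> x"
  proof (cases "x \<in> X")
    case False
    then show ?thesis using assms(2) by (auto simp: smat_apply_def)
  next
    case True
    have "smat_apply X A (smat_apply X B \<psi>) x = (\<Sum>y\<in>X. A x y * (\<Sum>z\<in>X. B y z * \<psi> z))"
      using True by (auto simp: smat_apply_def intro!: sum.cong)
    also have "\<dots> = (\<Sum>z\<in>X. smat_mult X A B x z * \<psi> z)"
      unfolding smat_mult_def sum_distrib_left sum_distrib_right
      by (subst sum.swap) (simp add: mult.assoc)
    also have "\<dots> = (\<Sum>z\<in>X. if z = x then \<psi> x else 0)"
      using True by (auto simp: assms(3) smat_one_def intro!: sum.cong)
    also have "\<dots> = \<psi> x"
      using True assms(1) by simp
    finally show ?thesis .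
  qed
qed

lemma bij_betw_smat_apply:
  assumes "finite X" and "smat_inverse_on X A (B :: ('v,'a::comm_ring_1) smat)"
  shows "bij_betw (smat_apply X A) (X \<rightarrow>\<^sub>E (UNIV :: 'a set)) (X \<rightarrow>\<^sub>E UNIV)"
proof (rule bij_betw_byWitness[where f' = "smat_apply X B"])
  show "\<forall>\<psi>\<in>X \<rightarrow>\<^sub>E UNIV. smat_apply X B (smat_apply X A \<psi>) = \<psi>"
    using smat_apply_smat_apply[OF assms(1)] assms(2) unfolding smat_inverse_on_def by blast
  show "\<forall>\<psi>\<in>X \<rightarrow>\<^sub>E UNIV. smat_apply X A (smat_apply X B \<psi>) = \<psi>"
    using smat_apply_smat_apply[OF assms(1)] assms(2) unfolding smat_inverse_on_def by blast
qed (auto simp: smat_apply_def)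

lemma sum_mult_of_bool_eq_point:
  "finite A \<Longrightarrow> a \<in> A \<Longrightarrow> (\<Sum>x\<in>A. f x * of_bool (x = a)) = (f a :: 'a::comm_ring_1)"
  by (subst sum.remove) auto

definition signless_dirac :: "('v,'a::comm_ring_1) smat" where
  "signless_dirac = smat_add signless_d (smat_transpose signless_d)"

definition connection_inverse :: "'v set set \<Rightarrow> ('v,'a::comm_ring_1) smat" where
  "connection_inverse X x y = connection_matrix x y - signless_hodge X x y"

lemma signless_hodge_eq: "signless_hodge X = smat_mult X signless_dirac signless_dirac"
  by (simp add: signless_hodge_def signless_dirac_def Let_def)

lemma connection_matrix_eq: "connection_matrix x y = of_bool (x \<inter> y \<noteq> {})"
  by (simp add: connection_matrix_def)

lemma connection_matrix_symmetric: "connection_matrix x y = connection_matrix y x"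
  by (simp add: connection_matrix_def Int_commute)

lemma signless_hodge_symmetric: "signless_hodge X x y = signless_hodge X y x"
  unfolding signless_hodge_eq smat_mult_def
  by (rule sum.cong) (auto simp: signless_dirac_def smat_add_def smat_transpose_def ac_simps)

lemma connection_inverse_symmetric: "connection_inverse X x y = connection_inverse X y x"
  by (simp add: connection_inverse_def connection_matrix_symmetric signless_hodge_symmetric)

lemma signless_dirac_vertex_vertex: "signless_dirac {v} {w} = 0"
  by (simp add: signless_dirac_def smat_add_def smat_transpose_def signless_d_def)

context
  fixes V :: "'v set" and E :: "'v set set" and X :: "'v set set"
  assumes graph: "simple_graph V E" and simplices_eq: "X = simplices V E"
begin

lemma finite_vertices: "finite V"
  using graph by (simp add: simple_graph_def)

lemma edge_subset: "e \<in> E \<Longrightarrow> e \<subseteq> V"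
  using graph by (simp add: simple_graph_def)

lemma card_edge: "e \<in> E \<Longrightarrow> card e = 2"
  using graph by (simp add: simple_graph_def)

lemma finite_edge: "e \<in> E \<Longrightarrow> finite e"
  using card_edge by (metis card.infinite zero_neq_numeral)

lemma finite_edges: "finite E"
  using finite_subset[of E "Pow V"] edge_subset finite_vertices by blast

lemma singleton_notin_edges: "{v} \<notin> E"
  using card_edge by fastforce

lemma finite_simplices: "finite X"
  using finite_vertices finite_edges by (simp add: simplices_eq simplices_def)

lemma simplices_cases:
  assumes "x \<in> X"
  obtains v where "v \<in> V" "x = {v}" | "x \<in> E"
  using assms by (auto simp: simplices_eq simplices_def)

lemma sum_simplices:
  "(\<Sum>x\<in>X. f x) = (\<Sum>v\<in>V. f {v}) + (\<Sum>e\<in>E. f e)"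
proof -
  have "X = (\<lambda>v. {v}) ` V \<union> E"
    by (auto simp: simplices_eq simplices_def)
  then have "(\<Sum>x\<in>X. f x) = (\<Sum>x\<in>(\<lambda>v. {v}) ` V. f x) + (\<Sum>e\<in>E. f e)"
    using finite_vertices finite_edges singleton_notin_edges by (auto intro: sum.union_disjoint)
  also have "(\<Sum>x\<in>(\<lambda>v. {v}) ` V. f x) = (\<Sum>v\<in>V. f {v})"
    by (simp add: sum.reindex)
  finally show ?thesis .
qed

lemma card_Int_edges_le_1:
  assumes "e \<in> E" "f \<in> E" "e \<noteq> f"
  shows "card (e \<inter> f) \<le> 1"
proof (rule ccontr)
  assume "\<not> card (e \<inter> f) \<le> 1"
  then have "card (e \<inter> f) = 2"
    using card_mono[OF finite_edge[OF assms(1)], of "e \<inter> f"] card_edge[OF assms(1)] by auto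
  then have "e \<inter> f = e" and "e \<inter> f = f"
    using card_subset_eq[OF finite_edge, of _ "e \<inter> f"] card_edge assms(1,2) by auto
  with assms(3) show False by simp
qed

text \<open>The identity \<open>B\<^sup>T B = C + 1\<close>.\<close>

lemma card_Int_edges:
  assumes "e \<in> E" "f \<in> E"
  shows "card (e \<inter> f) = of_bool (e \<inter> f \<noteq> {}) + of_bool (e = f)"
proof (cases "e = f")
  case True
  then show ?thesis using card_edge[OF assms(1)] by auto
next
  case False
  then show ?thesis
    using card_Int_edges_le_1[OF assms] finite_edge[OF assms(1)]
    by (cases "card (e \<inter> f)") auto
qed

lemma sum_common_vertices:
  assumes "e \<in> E"
  shows "(\<Sum>u\<in>V. of_bool (u \<in> e) * of_bool (u \<in> f)) = of_nat (card (e \<inter> f))"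
proof -
  have "V \<inter> {u. u \<in> e \<and> u \<in> f} = e \<inter> f"
    using edge_subset[OF assms] by auto
  then show ?thesis
    unfolding of_bool_conj[symmetric] using finite_vertices by simp
qed

lemma signless_dirac_vertex_edge: "e \<in> E \<Longrightarrow> signless_dirac {v} e = of_bool (v \<in> e)"
  using card_edge[of e]
  by (auto simp: signless_dirac_def smat_add_def smat_transpose_def signless_d_def)

lemma signless_dirac_edge_vertex: "e \<in> E \<Longrightarrow> signless_dirac e {v} = of_bool (v \<in> e)"
  using card_edge[of e]
  by (auto simp: signless_dirac_def smat_add_def smat_transpose_def signless_d_def)

lemma signless_dirac_edge_edge: "e \<in> E \<Longrightarrow> f \<in> E \<Longrightarrow> signless_dirac e f = 0"
  using card_edge[of e] card_edge[of f]
  by (simp add: signless_dirac_def smat_add_def smat_transpose_def signless_d_def)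

lemma signless_hodge_vertex_vertex:
  "signless_hodge X {v} {w} = of_nat (card {f \<in> E. v \<in> f \<and> w \<in> f})"
  unfolding signless_hodge_eq smat_mult_def sum_simplices
  by (simp add: signless_dirac_vertex_vertex signless_dirac_vertex_edge
      signless_dirac_edge_vertex finite_edges of_bool_conj[symmetric] Int_def cong: sum.cong)

lemma signless_hodge_vertex_edge: "g \<in> E \<Longrightarrow> signless_hodge X {v} g = 0"
  unfolding signless_hodge_eq smat_mult_def sum_simplices
  by (simp add: signless_dirac_vertex_vertex signless_dirac_edge_edge cong: sum.cong)

lemma signless_hodge_edge_edge:
  assumes "e \<in> E" "g \<in> E"
  shows "signless_hodge X e g = of_bool (e \<inter> g \<noteq> {}) + of_bool (e = g)"
proof -
  have "signless_hodge X e g = of_nat (card (e \<inter> g))"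
    unfolding signless_hodge_eq smat_mult_def sum_simplices
    using assms sum_common_vertices[OF assms(1)]
    by (simp add: signless_dirac_edge_edge signless_dirac_vertex_edge
        signless_dirac_edge_vertex cong: sum.cong)
  then show ?thesis
    using card_Int_edges[OF assms] by simp
qed

lemma connection_inverse_vertex_vertex:
  "connection_inverse X {v} {w} = of_bool (v = w) - of_nat (card {f \<in> E. v \<in> f \<and> w \<in> f})"
  by (simp add: connection_inverse_def connection_matrix_eq signless_hodge_vertex_vertex)

lemma connection_inverse_vertex_edge: "g \<in> E \<Longrightarrow> connection_inverse X {v} g = of_bool (v \<in> g)"
  by (simp add: connection_inverse_def connection_matrix_eq signless_hodge_vertex_edge)

lemma connection_inverse_edge_vertex: "g \<in> E \<Longrightarrow> connection_inverse X g {v} = of_bool (v \<in> g)"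
  using connection_inverse_vertex_edge connection_inverse_symmetric by metis

lemma connection_inverse_edge_edge:
  "e \<in> E \<Longrightarrow> g \<in> E \<Longrightarrow> connection_inverse X e g = - of_bool (e = g)"
  by (simp add: connection_inverse_def connection_matrix_eq signless_hodge_edge_edge)

lemma sum_connection_matrix_vertex:
  "v \<in> V \<Longrightarrow> (\<Sum>u\<in>V. connection_matrix {v} {u} * g u) = g v"
  using finite_vertices by (subst sum.remove) (auto simp: connection_matrix_eq)

lemma card_edges_containing:
  "of_nat (card {f \<in> E. v \<in> f \<and> w \<in> f}) = (\<Sum>f\<in>E. of_bool (v \<in> f) * of_bool (w \<in> f))"
  using finite_edges by (simp add: of_bool_conj[symmetric] Int_def)

lemma connection_mult_inverse_vertex_vertex:
  assumes "v \<in> V"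
  shows "smat_mult X connection_matrix (connection_inverse X) {v} {w} = of_bool (v = w)"
  unfolding smat_mult_def sum_simplices sum_connection_matrix_vertex[OF assms]
  by (simp add: connection_matrix_eq connection_inverse_vertex_vertex
      connection_inverse_edge_vertex card_edges_containing cong: sum.cong)

lemma connection_mult_inverse_vertex_edge:
  assumes "v \<in> V" "g \<in> E"
  shows "smat_mult X connection_matrix (connection_inverse X) {v} g = 0"
  unfolding smat_mult_def sum_simplices sum_connection_matrix_vertex[OF assms(1)]
  using assms(2) finite_edges
  by (simp add: connection_matrix_eq connection_inverse_vertex_edge
      connection_inverse_edge_edge sum_negf cong: sum.cong)

lemma connection_mult_inverse_edge_edge:
  assumes "e \<in> E" "g \<in> E"
  shows "smat_mult X connection_matrix (connection_inverse X) e g = of_bool (e = g)"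
proof -
  have vertices: "(\<Sum>u\<in>V. connection_matrix e {u} * connection_inverse X {u} g)
      = of_bool (e \<inter> g \<noteq> {}) + of_bool (e = g)"
    using sum_common_vertices[OF assms(1), of g] card_Int_edges[OF assms]
    by (simp add: connection_matrix_eq connection_inverse_vertex_edge assms(2))
  have edges: "(\<Sum>f\<in>E. connection_matrix e f * connection_inverse X f g)
      = - of_bool (e \<inter> g \<noteq> {})"
    using assms finite_edges
    by (simp add: connection_matrix_eq connection_inverse_edge_edge sum_negf cong: sum.cong)
  show ?thesis
    unfolding smat_mult_def sum_simplices vertices edges by simp
qed

lemma sum_vertices_double_count:
  assumes "e \<in> E"
  shows "(\<Sum>u\<in>V. of_bool (u \<in> e) * of_nat (card {f \<in> E. u \<in> f \<and> w \<in> f}))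
       = (\<Sum>f\<in>E. of_bool (w \<in> f) * of_nat (card (e \<inter> f)) :: 'a::comm_ring_1)"
proof -
  have "(\<Sum>u\<in>V. of_bool (u \<in> e) * of_nat (card {f \<in> E. u \<in> f \<and> w \<in> f}))
      = (\<Sum>f\<in>E. \<Sum>u\<in>V. of_bool (w \<in> f) * (of_bool (u \<in> e) * of_bool (u \<in> f)) :: 'a)"
    unfolding card_edges_containing sum_distrib_left
    by (subst sum.swap) (simp add: ac_simps)
  also have "\<dots> = (\<Sum>f\<in>E. of_bool (w \<in> f) * of_nat (card (e \<inter> f)))"
    by (simp only: sum_distrib_left[symmetric] sum_common_vertices[OF assms])
  finally show ?thesis .
qed

lemma connection_mult_inverse_edge_vertex:
  assumes "e \<in> E" "w \<in> V"
  shows "smat_mult X connection_matrix (connection_inverse X) e {w} = (0 :: 'a::comm_ring_1)"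
proof -
  have "(\<Sum>u\<in>V. connection_matrix e {u} * connection_inverse X {u} {w})
      = (\<Sum>u\<in>V. of_bool (u \<in> e) * of_bool (u = w))
        - (\<Sum>u\<in>V. of_bool (u \<in> e) * of_nat (card {f \<in> E. u \<in> f \<and> w \<in> f}))"
    by (simp add: connection_matrix_eq connection_inverse_vertex_vertex right_diff_distrib sum_subtractf)
  also have "\<dots> = of_bool (w \<in> e) - (\<Sum>f\<in>E. of_bool (w \<in> f) * of_nat (card (e \<inter> f)))"
    unfolding sum_vertices_double_count[OF assms(1)] using assms(2) finite_vertices by simp
  also have "(\<Sum>f\<in>E. of_bool (w \<in> f) * of_nat (card (e \<inter> f)) :: 'a)
      = (\<Sum>f\<in>E. of_bool (w \<in> f) * of_bool (e \<inter> f \<noteq> {})) + (\<Sum>f\<in>E. of_bool (w \<in> f) * of_bool (f = e))"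
    using assms(1) by (simp add: card_Int_edges distrib_left sum.distrib eq_commute[of e] cong: sum.cong)
  also have "(\<Sum>f\<in>E. of_bool (w \<in> f) * of_bool (f = e)) = (of_bool (w \<in> e) :: 'a)"
    using finite_edges assms(1) by (rule sum_mult_of_bool_eq_point)
  finally have vertices: "(\<Sum>u\<in>V. connection_matrix e {u} * connection_inverse X {u} {w})
      = - (\<Sum>f\<in>E. of_bool (w \<in> f) * of_bool (e \<inter> f \<noteq> {}) :: 'a)"
    by simp
  have edges: "(\<Sum>f\<in>E. connection_matrix e f * connection_inverse X f {w})
      = (\<Sum>f\<in>E. of_bool (w \<in> f) * of_bool (e \<inter> f \<noteq> {}) :: 'a)"
    by (simp add: connection_matrix_eq connection_inverse_edge_vertex mult.commute cong: sum.cong)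
  show ?thesis
    unfolding smat_mult_def sum_simplices vertices edges by simp
qed

lemma connection_mult_inverse:
  assumes "x \<in> X" "y \<in> X"
  shows "smat_mult X connection_matrix (connection_inverse X) x y = (smat_one x y :: 'a::comm_ring_1)"
  using assms(1)
proof (cases rule: simplices_cases)
  case (1 v)
  with assms(2) show ?thesis
    by (cases rule: simplices_cases)
      (auto simp: smat_one_def connection_mult_inverse_vertex_vertex
        connection_mult_inverse_vertex_edge singleton_notin_edges)
next
  case 2
  with assms(2) show ?thesis
    by (cases rule: simplices_cases)
      (auto simp: smat_one_def connection_mult_inverse_edge_vertex
        connection_mult_inverse_edge_edge singleton_notin_edges)
qed

lemma smat_inverse_on_connection_inverse:
  "smat_inverse_on X connection_matrix (connection_inverse X :: ('v,'a::comm_ring_1) smat)"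
  by (rule smat_inverse_on_if_symmetric)
    (auto simp: connection_mult_inverse connection_matrix_symmetric connection_inverse_symmetric)

end

theorem mainTheorem7:
  fixes V :: "'v set" and E :: "'v set set"
  assumes "simple_graph V E"
  defines "X \<equiv> simplices V E"
  defines "L \<equiv> (connection_matrix :: ('v, 'f::{field,finite}) smat)"
  shows "(\<exists>Linv. smat_inverse_on X L Linv
           \<and> (\<forall>x\<in>X. \<forall>y\<in>X. (signless_hodge X :: ('v,'f) smat) x y = L x y - Linv x y))
         \<and> bij_betw (smat_apply X L) (X \<rightarrow>\<^sub>E (UNIV :: 'f set)) (X \<rightarrow>\<^sub>E (UNIV :: 'f set))"
proof -
  note X = assms(1) X_def[THEN meta_eq_to_obj_eq]
  have inverse: "smat_inverse_on X L (connection_inverse X)"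
    unfolding L_def using X by (rule smat_inverse_on_connection_inverse)
  moreover have "\<forall>x\<in>X. \<forall>y\<in>X. signless_hodge X x y = L x y - connection_inverse X x y"
    by (simp add: L_def connection_inverse_def)
  moreover have "bij_betw (smat_apply X L) (X \<rightarrow>\<^sub>E UNIV) (X \<rightarrow>\<^sub>E UNIV)"
    using finite_simplices[OF X] inverse by (rule bij_betw_smat_apply)
  ultimately show ?thesis by blast
qed

end
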